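(* Let $D$ be a bounded domain of $\mathbb{C}^n$ and let $f:D\to D$ be a holomorphic map having a fixed point $a\in D$. Then for every $r>0$, $f(B_k(a,r))\subset B_k(a,r)$. Moreover there exists $r>0$ such that the sequence of iterates $(f|_{B_k(a,r)})^n$ satisfies property (H): every subsequence of it converging uniformly on compact subsets of $B_k(a,r)$ has a limit $g$ with $g(B_k(a,r))\subset B_k(a,r)$.
   Context: Let $\Delta$ be the open unit disc and $\omega(z,w)=\operatorname{artanh}\left|\frac{z-w}{1-\bar w z}\right|$ the Poincaré distance. For $z,w\in D$, $\delta_D(z,w)=\inf\{\omega(\zeta,\eta)\mid \exists\,\varphi:\Delta\to D \text{ holomorphic}, \varphi(\zeta)=z,\varphi(\eta)=w\}$; the Kobayashi distance is $k_D(z,w)=\inf\sum_{i=1}^{m-1}\delta_D(z_i,z_{i+1})$ over finite chains $z_1=z,\dots,z_m=w$ in $D$. $B_k(a,r)=\{z\in D\mid k_D(a,z)<r\}$. *)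

theory Defs
  imports "HOL-Analysis.Analysis"
begin

text \<open>Holomorphic maps between open subsets of complex vector spaces C^m,
 modelled as complex ^ 'm: complex-Frechet differentiable at every point,
 i.e. real-differentiable with a complex-linear derivative.\<close>

definition cvec_holomorphic_on ::
  "(complex ^ 'm::finite \<Rightarrow> complex ^ 'n::finite) \<Rightarrow> (complex ^ 'm) set \<Rightarrow> bool" where
  "cvec_holomorphic_on f S \<longleftrightarrow>
     (\<forall>z\<in>S. \<exists>L. (f has_derivative L) (at z) \<and> (\<forall>c v. L (c *s v) = c *s L v))"

definition disc_holomorphic_on ::
  "(complex \<Rightarrow> complex ^ 'n::finite) \<Rightarrow> complex set \<Rightarrow> bool" where
  "disc_holomorphic_on \<phi> S \<longleftrightarrow>
     (\<forall>z\<in>S. \<exists>L. (\<phi> has_derivative L) (at z) \<and> (\<forall>c v. L (c * v) = c *s L v))"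

definition poincare_dist :: "complex \<Rightarrow> complex \<Rightarrow> real" where
  "poincare_dist z w = artanh (cmod ((z - w) / (1 - cnj w * z)))"

definition lempert :: "(complex ^ 'n::finite) set \<Rightarrow> complex ^ 'n \<Rightarrow> complex ^ 'n \<Rightarrow> real" where
  "lempert D z w = Inf {poincare_dist \<zeta> \<eta> | \<zeta> \<eta> \<phi>.
      \<zeta> \<in> ball 0 1 \<and> \<eta> \<in> ball 0 1 \<and> disc_holomorphic_on \<phi> (ball 0 1) \<and>
      \<phi> ` ball 0 1 \<subseteq> D \<and> \<phi> \<zeta> = z \<and> \<phi> \<eta> = w}"

definition kobayashi :: "(complex ^ 'n::finite) set \<Rightarrow> complex ^ 'n \<Rightarrow> complex ^ 'n \<Rightarrow> real" where
  "kobayashi D z w = Inf {(\<Sum>i<length zs - 1. lempert D (zs ! i) (zs ! Suc i)) | zs.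
      zs \<noteq> [] \<and> hd zs = z \<and> last zs = w \<and> set zs \<subseteq> D}"

definition kob_ball :: "(complex ^ 'n::finite) set \<Rightarrow> complex ^ 'n \<Rightarrow> real \<Rightarrow> (complex ^ 'n) set" where
  "kob_ball D a r = {z \<in> D. kobayashi D a z < r}"

definition property_H :: "(nat \<Rightarrow> 'a::metric_space \<Rightarrow> 'b::metric_space) \<Rightarrow> 'a set \<Rightarrow> 'b set \<Rightarrow> bool" where
  "property_H F B B' \<longleftrightarrow>
     (\<forall>s g. strict_mono s \<and> (\<forall>K. compact K \<and> K \<subseteq> B \<longrightarrow> uniform_limit K (\<lambda>m. F (s m)) g sequentially)
        \<longrightarrow> g ` B \<subseteq> B')"

end

theory Submission
  imports Defs "HOL-Complex_Analysis.Complex_Analysis"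
begin

(* A holomorphic self-map of D sends analytic discs in D to analytic discs in D, so it does not
   increase the Lempert function and hence not the Kobayashi distance; since f fixes a, it maps
   every Kobayashi ball about a into itself.
   For property (H): Schwarz-Pick applied to the coordinates of analytic discs in the bounded
   domain D gives |z - w| <= C k_D(z, w). Hence, for small r, the limit of iterates f^(n_j)(z)
   with z in B_k(a, r) lies within C k_D(a, z) < eps of a, so in D. Near a point p of D straight
   discs give delta_D(u, p) -> 0 as u -> p, so by the triangle inequality for chains
   k_D(a, p) <= liminf k_D(a, u_j), and the limit stays in B_k(a, r). *)

section \<open>The Poincare distance and the Schwarz-Pick lemma\<close>

lemma cmod_Moebius_lt_1:
  fixes z w :: complex
  assumes "norm z < 1" "norm w < 1"
  shows "cmod ((z - w) / (1 - cnj w * z)) < 1"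
  using Moebius_function_norm_lt_1[OF assms(2,1), of 0] by (simp add: Moebius_function_simple)

lemma artanh_ge_half:
  fixes x :: real
  assumes "0 \<le> x" "x < 1"
  shows "x / 2 \<le> artanh x"
proof -
  have "ln (1 - x) \<le> - x"
    using ln_one_minus_pos_upper_bound assms by blast
  moreover have "0 \<le> ln (1 + x)"
    using assms by simp
  moreover have "ln ((1 + x) / (1 - x)) = ln (1 + x) - ln (1 - x)"
    using assms by (simp add: ln_div)
  ultimately show ?thesis
    by (simp add: artanh_def)
qed

lemma poincare_dist_ge_half:
  assumes "norm z < 1" "norm w < 1"
  shows "cmod ((z - w) / (1 - cnj w * z)) / 2 \<le> poincare_dist z w"
  unfolding poincare_dist_def using cmod_Moebius_lt_1[OF assms] by (intro artanh_ge_half) auto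

lemma poincare_dist_nonneg:
  assumes "norm z < 1" "norm w < 1"
  shows "0 \<le> poincare_dist z w"
  using poincare_dist_ge_half[OF assms] by (meson norm_ge_zero divide_nonneg_nonneg zero_le_numeral order_trans)

lemma Schwarz_Pick_norm_le:
  fixes h :: "complex \<Rightarrow> complex"
  assumes "h holomorphic_on ball 0 1" "\<And>t. norm t < 1 \<Longrightarrow> norm (h t) < 1"
    and "norm \<eta> < 1" "h \<eta> = 0" "norm \<zeta> < 1"
  shows "norm (h \<zeta>) \<le> cmod ((\<zeta> - \<eta>) / (1 - cnj \<eta> * \<zeta>))"
proof -
  define k where "k = h \<circ> Moebius_function 0 (- \<eta>)"
  have m: "norm (- \<eta>) < 1"
    using assms by simp
  have "Moebius_function 0 (- \<eta>) ` ball 0 1 \<subseteq> ball 0 1"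
    using Moebius_function_norm_lt_1[OF m] by auto
  then have hol: "k holomorphic_on ball 0 1"
    unfolding k_def by (rule holomorphic_on_compose_gen[OF Moebius_function_holomorphic[OF m] assms(1)])
  have k0: "k 0 = 0"
    using assms(4) by (simp add: k_def Moebius_function_of_zero)
  have bounded: "norm (k t) < 1" if "norm t < 1" for t
    using assms(2) Moebius_function_norm_lt_1[OF m that] by (simp add: k_def)
  have "norm (Moebius_function 0 \<eta> \<zeta>) < 1"
    using Moebius_function_norm_lt_1[OF assms(3,5)] by simp
  note Schwarz = Schwarz_Lemma(1)[OF hol k0 bounded this]
  have "k (Moebius_function 0 \<eta> \<zeta>) = h \<zeta>"
    using Moebius_function_compose[of "- \<eta>" \<eta> \<zeta>] assms(3,5) by (simp add: k_def)
  then have "norm (h \<zeta>) \<le> norm (Moebius_function 0 \<eta> \<zeta>)"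
    using Schwarz by simp
  then show ?thesis
    by (simp add: Moebius_function_simple)
qed

lemma norm_vector_scalar_mult:
  fixes x :: "complex ^ 'n::finite"
  shows "norm (c *s x) = cmod c * norm x"
  unfolding norm_vec_def by (simp add: norm_mult L2_set_right_distrib)

lemma has_derivative_vec_lambda_complex:
  fixes g :: "'n::finite \<Rightarrow> complex \<Rightarrow> complex"
  assumes "\<And>i. (g i has_field_derivative d i) (at x)"
  shows "((\<lambda>t. \<chi> i. g i t) has_derivative (\<lambda>v. \<chi> i. v * d i)) (at x)"
proof -
  define b :: "'n \<Rightarrow> complex \<Rightarrow> complex ^ 'n" where "b i c = (\<chi> j. if j = i then c else 0)" for i c
  have "bounded_linear (b i)" for i
    unfolding b_def by (rule bounded_linearI') (auto simp: vec_eq_iff)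
  moreover have "(g i has_derivative (\<lambda>v. v * d i)) (at x)" for i
    using assms[of i] by (simp add: has_field_derivative_def mult_commute_abs)
  ultimately have "((\<lambda>t. b i (g i t)) has_derivative (\<lambda>v. b i (v * d i))) (at x)" for i
    by (rule bounded_linear.has_derivative)
  then have "((\<lambda>t. \<Sum>i\<in>UNIV. b i (g i t)) has_derivative (\<lambda>v. \<Sum>i\<in>UNIV. b i (v * d i))) (at x)"
    by (rule has_derivative_sum)
  moreover have "(\<chi> i. h i) = (\<Sum>i\<in>UNIV. b i (h i))" for h :: "'n \<Rightarrow> complex"
    by (simp add: vec_eq_iff b_def sum_component)
  ultimately show ?thesis
    by simp
qed

lemma disc_holomorphic_on_iff_components:
  fixes \<phi> :: "complex \<Rightarrow> complex ^ 'n::finite"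
  assumes "open S"
  shows "disc_holomorphic_on \<phi> S \<longleftrightarrow> (\<forall>i. (\<lambda>t. \<phi> t $ i) holomorphic_on S)"
proof
  assume hol: "disc_holomorphic_on \<phi> S"
  show "\<forall>i. (\<lambda>t. \<phi> t $ i) holomorphic_on S"
  proof (intro allI holomorphic_onI)
    fix i z assume "z \<in> S"
    then obtain L where L: "(\<phi> has_derivative L) (at z)" "\<And>c v. L (c * v) = c *s L v"
      using hol unfolding disc_holomorphic_on_def by blast
    have "((\<lambda>t. \<phi> t $ i) has_derivative (\<lambda>v. L v $ i)) (at z)"
      using bounded_linear.has_derivative[OF bounded_linear_vec_nth L(1)] .
    moreover have "(\<lambda>v. L v $ i) = (\<lambda>v. L 1 $ i * v)"
    proof
      show "L v $ i = L 1 $ i * v" for v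
        using L(2)[of v 1] by (simp add: mult.commute)
    qed
    ultimately have "((\<lambda>t. \<phi> t $ i) has_field_derivative L 1 $ i) (at z)"
      by (simp add: has_field_derivative_def)
    then show "(\<lambda>t. \<phi> t $ i) field_differentiable at z within S"
      using field_differentiable_at_within field_differentiable_def by blast
  qed
next
  assume hol: "\<forall>i. (\<lambda>t. \<phi> t $ i) holomorphic_on S"
  show "disc_holomorphic_on \<phi> S"
    unfolding disc_holomorphic_on_def
  proof
    fix z assume z: "z \<in> S"
    have "((\<lambda>t. \<chi> i. \<phi> t $ i) has_derivative (\<lambda>v. \<chi> i. v * deriv (\<lambda>t. \<phi> t $ i) z)) (at z)"
      by (rule has_derivative_vec_lambda_complex, rule holomorphic_derivI) (use hol assms z in auto)
    moreover have "(\<chi> i. (c * v) * deriv (\<lambda>t. \<phi> t $ i) z) = c *s (\<chi> i. v * deriv (\<lambda>t. \<phi> t $ i) z)"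
      for c v by (simp add: vec_eq_iff mult.assoc)
    ultimately show "\<exists>L. (\<phi> has_derivative L) (at z) \<and> (\<forall>c v. L (c * v) = c *s L v)"
      by auto
  qed
qed

lemma disc_holomorphic_on_compose:
  assumes "disc_holomorphic_on \<phi> S" "cvec_holomorphic_on f D" "\<phi> ` S \<subseteq> D"
  shows "disc_holomorphic_on (f \<circ> \<phi>) S"
  unfolding disc_holomorphic_on_def
proof
  fix t assume t: "t \<in> S"
  obtain L where L: "(\<phi> has_derivative L) (at t)" "\<forall>c v. L (c * v) = c *s L v"
    using assms(1) t unfolding disc_holomorphic_on_def by blast
  obtain M where M: "(f has_derivative M) (at (\<phi> t))" "\<forall>c v. M (c *s v) = c *s M v"
    using assms(2,3) t unfolding cvec_holomorphic_on_def by blast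
  show "\<exists>L. ((f \<circ> \<phi>) has_derivative L) (at t) \<and> (\<forall>c v. L (c * v) = c *s L v)"
  proof (intro exI conjI allI)
    show "((f \<circ> \<phi>) has_derivative (M \<circ> L)) (at t)"
      using has_derivative_compose[OF L(1) M(1)] by (simp add: o_def)
    show "(M \<circ> L) (c * v) = c *s (M \<circ> L) v" for c v
      using L(2) M(2) by simp
  qed
qed

section \<open>The Lempert function\<close>

definition lempert_set :: "(complex ^ 'n::finite) set \<Rightarrow> complex ^ 'n \<Rightarrow> complex ^ 'n \<Rightarrow> real set" where
  "lempert_set D z w = {poincare_dist \<zeta> \<eta> | \<zeta> \<eta> \<phi>.
      \<zeta> \<in> ball 0 1 \<and> \<eta> \<in> ball 0 1 \<and> disc_holomorphic_on \<phi> (ball 0 1) \<and>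
      \<phi> ` ball 0 1 \<subseteq> D \<and> \<phi> \<zeta> = z \<and> \<phi> \<eta> = w}"

lemma lempert_eq_Inf: "lempert D z w = Inf (lempert_set D z w)"
  unfolding lempert_def lempert_set_def ..

lemma lempert_setI:
  assumes "\<zeta> \<in> ball 0 1" "\<eta> \<in> ball 0 1" "disc_holomorphic_on \<phi> (ball 0 1)"
    and "\<phi> ` ball 0 1 \<subseteq> D" "\<phi> \<zeta> = z" "\<phi> \<eta> = w"
  shows "poincare_dist \<zeta> \<eta> \<in> lempert_set D z w"
  unfolding lempert_set_def using assms by blast

lemma lempert_setE:
  assumes "x \<in> lempert_set D z w"
  obtains \<zeta> \<eta> \<phi> where "x = poincare_dist \<zeta> \<eta>" "\<zeta> \<in> ball 0 1" "\<eta> \<in> ball 0 1"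
    "disc_holomorphic_on \<phi> (ball 0 1)" "\<phi> ` ball 0 1 \<subseteq> D" "\<phi> \<zeta> = z" "\<phi> \<eta> = w"
  using assms unfolding lempert_set_def by blast

lemma lempert_set_nonneg: "x \<in> lempert_set D z w \<Longrightarrow> 0 \<le> x"
  by (auto elim!: lempert_setE intro: poincare_dist_nonneg)

lemma lempert_le: "x \<in> lempert_set D z w \<Longrightarrow> lempert D z w \<le> x"
  unfolding lempert_eq_Inf by (rule cInf_lower) (auto intro: bdd_belowI lempert_set_nonneg)

lemma lempert_set_image_subset:
  assumes "cvec_holomorphic_on f D" "f ` D \<subseteq> D"
  shows "lempert_set D z w \<subseteq> lempert_set D (f z) (f w)"
proof
  fix x assume "x \<in> lempert_set D z w"
  then obtain \<zeta> \<eta> \<phi> where x: "x = poincare_dist \<zeta> \<eta>" "\<zeta> \<in> ball 0 1" "\<eta> \<in> ball 0 1"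
    "disc_holomorphic_on \<phi> (ball 0 1)" "\<phi> ` ball 0 1 \<subseteq> D" "\<phi> \<zeta> = z" "\<phi> \<eta> = w"
    by (rule lempert_setE)
  have "disc_holomorphic_on (f \<circ> \<phi>) (ball 0 1)"
    using disc_holomorphic_on_compose[OF x(4) assms(1) x(5)] .
  moreover have "(f \<circ> \<phi>) ` ball 0 1 \<subseteq> D"
    using x(5) assms(2) by (auto simp: image_subset_iff)
  ultimately show "x \<in> lempert_set D (f z) (f w)"
    unfolding x(1) using lempert_setI[of \<zeta> \<eta> "f \<circ> \<phi>"] x by simp
qed

lemma artanh_in_lempert_set:
  fixes D :: "(complex ^ 'n::finite) set"
  assumes "ball w \<delta> \<subseteq> D" "norm (u - w) < \<delta>"
  shows "artanh (norm (u - w) / \<delta>) \<in> lempert_set D u w"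
proof -
  have \<delta>: "0 < \<delta>"
    using assms(2) norm_ge_zero[of "u - w"] by linarith
  define k :: complex where "k = of_real (\<delta> / norm (u - w))"
  define \<phi> where "\<phi> t = w + (t * k) *s (u - w)" for t
  define \<zeta> :: complex where "\<zeta> = of_real (norm (u - w) / \<delta>)"
  have "\<zeta> \<in> ball 0 1"
    using assms(2) \<delta> by (simp add: \<zeta>_def norm_divide)
  moreover have "disc_holomorphic_on \<phi> (ball 0 1)"
    unfolding disc_holomorphic_on_iff_components[OF open_ball] \<phi>_def
    by (auto intro!: holomorphic_intros)
  moreover have "\<phi> ` ball 0 1 \<subseteq> D"
  proof
    fix y assume "y \<in> \<phi> ` ball 0 1"
    then obtain t where t: "norm t < 1" "y = \<phi> t"
      by auto
    have "cmod k * norm (u - w) \<le> \<delta>"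
      using \<delta> by (cases "u = w") (auto simp: k_def norm_divide)
    have "norm (y - w) = cmod t * (cmod k * norm (u - w))"
      unfolding t(2) \<phi>_def by (simp only: add_diff_cancel_left' norm_vector_scalar_mult norm_mult mult.assoc)
    also have "\<dots> \<le> cmod t * \<delta>"
      using \<open>cmod k * norm (u - w) \<le> \<delta>\<close> by (simp add: mult_left_mono)
    also have "\<dots> < \<delta>"
      using t(1) \<delta> by simp
    finally show "y \<in> D"
      using assms(1) by (auto simp: dist_norm norm_minus_commute)
  qed
  moreover have "\<phi> \<zeta> = u"
  proof (cases "u = w")
    case False
    then have "\<zeta> * k = 1"
      using \<delta> by (simp add: \<zeta>_def k_def flip: of_real_mult)
    then show ?thesis
      by (simp add: \<phi>_def)
  qed (simp add: \<phi>_def)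
  moreover have "\<phi> 0 = w"
    by (simp add: \<phi>_def)
  moreover have "poincare_dist \<zeta> 0 = artanh (norm (u - w) / \<delta>)"
    using \<delta> by (simp add: poincare_dist_def \<zeta>_def norm_divide)
  ultimately show ?thesis
    using lempert_setI[of \<zeta> 0 \<phi> D u w] by simp
qed

(* Schwarz-Pick for each coordinate of the disc, rescaled by 2 R + 1 into the unit disc. *)
lemma norm_diff_le_lempert_set:
  fixes D :: "(complex ^ 'n::finite) set"
  assumes D: "D \<subseteq> cball 0 R" and "x \<in> lempert_set D z w"
  shows "norm (z - w) \<le> 2 * real CARD('n) * (2 * R + 1) * x"
proof -
  obtain \<zeta> \<eta> \<phi> where x: "x = poincare_dist \<zeta> \<eta>" "\<zeta> \<in> ball 0 1" "\<eta> \<in> ball 0 1"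
    "disc_holomorphic_on \<phi> (ball 0 1)" "\<phi> ` ball 0 1 \<subseteq> D" "\<phi> \<zeta> = z" "\<phi> \<eta> = w"
    using assms(2) by (rule lempert_setE)
  have \<phi>R: "norm (\<phi> t) \<le> R" if "norm t < 1" for t
    using x(5) D that by (auto simp: image_subset_iff subset_iff)
  have R: "0 \<le> R"
    using \<phi>R[of 0] by (simp add: order_trans[OF norm_ge_zero])
  define K where "K = 2 * R + 1"
  have K: "0 < K" "cmod (of_real K) = K"
    using R by (simp_all add: K_def del: of_real_add of_real_mult)
  define m where "m = cmod ((\<zeta> - \<eta>) / (1 - cnj \<eta> * \<zeta>))"
  have component: "norm (z $ i - w $ i) \<le> K * m" for i
  proof -
    define h where "h t = (\<phi> t $ i - w $ i) / of_real K" for t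
    have hol: "h holomorphic_on ball 0 1"
      using x(4) K(1) unfolding h_def disc_holomorphic_on_iff_components[OF open_ball]
      by (auto intro!: holomorphic_intros)
    have bounded: "norm (h t) < 1" if "norm t < 1" for t
    proof -
      have "norm (\<phi> t $ i - w $ i) \<le> norm (\<phi> t - w)"
        using Finite_Cartesian_Product.norm_nth_le[of "\<phi> t - w" i] by simp
      also have "\<dots> \<le> 2 * R"
        using norm_triangle_ineq4[of "\<phi> t" w] \<phi>R[OF that] \<phi>R[of \<eta>] x(3,7) by simp
      finally show ?thesis
        using K by (simp add: h_def norm_divide K_def)
    qed
    have "h \<eta> = 0"
      by (simp add: h_def x(7))
    then have "norm (h \<zeta>) \<le> m"
      unfolding m_def using Schwarz_Pick_norm_le[OF hol bounded] x(2,3) by simp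
    moreover have "norm (h \<zeta>) = norm (z $ i - w $ i) / K"
      using K x(6) by (simp add: h_def norm_divide)
    ultimately show ?thesis
      using K by (simp add: divide_le_eq mult.commute)
  qed
  have "norm (z - w) \<le> (\<Sum>i\<in>UNIV. norm ((z - w) $ i))"
    unfolding norm_vec_def by (rule L2_set_le_sum) simp
  also have "\<dots> \<le> real CARD('n) * (K * m)"
    using sum_mono[of UNIV "\<lambda>i. norm ((z - w) $ i)" "\<lambda>_. K * m"] component by simp
  also have "\<dots> \<le> real CARD('n) * (K * (2 * x))"
  proof -
    have "m \<le> 2 * x"
      using poincare_dist_ge_half[of \<zeta> \<eta>] x(1-3) by (simp add: m_def)
    then show ?thesis
      using K(1) by (simp add: mult_left_mono)
  qed
  finally show ?thesis
    by (simp add: K_def algebra_simps)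
qed

section \<open>Any two points of a domain lie on an analytic disc\<close>

lemma Ln_one_plus_disc_bounds:
  fixes t :: complex and \<rho> :: real
  assumes "0 < \<rho>" "\<rho> < 1" "norm t < 1"
  shows "1 + of_real \<rho> * t \<notin> \<real>\<^sub>\<le>\<^sub>0"
    and "ln (1 - \<rho>) < Re (Ln (1 + of_real \<rho> * t))"
    and "Re (Ln (1 + of_real \<rho> * t)) < 1"
    and "\<bar>Im (Ln (1 + of_real \<rho> * t))\<bar> < pi / 2"
proof -
  define w where "w = 1 + of_real \<rho> * t"
  have "- 1 < Re t"
    using abs_Re_le_cmod[of t] assms(3) by linarith
  then have Re_w: "1 - \<rho> < Re w"
    using mult_strict_left_mono[of "- 1" "Re t" \<rho>] assms(1) by (simp add: w_def)
  then have w0: "0 < Re w"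
    using assms(2) by linarith
  then show "1 + of_real \<rho> * t \<notin> \<real>\<^sub>\<le>\<^sub>0"
    by (auto simp: w_def complex_nonpos_Reals_iff)
  have "w \<noteq> 0"
    using w0 by auto
  then have Re_Ln_w: "Re (Ln w) = ln (norm w)"
    by simp
  have "ln (1 - \<rho>) < ln (Re w)"
    using Re_w assms(2) by simp
  also have "\<dots> \<le> ln (norm w)"
    using w0 abs_Re_le_cmod[of w] by (subst ln_le_cancel_iff) auto
  finally show "ln (1 - \<rho>) < Re (Ln (1 + of_real \<rho> * t))"
    using Re_Ln_w by (simp add: w_def)
  have "norm w \<le> 1 + \<rho> * norm t"
    using norm_triangle_ineq[of 1 "of_real \<rho> * t"] assms(1) by (simp add: w_def norm_mult)
  also have "\<dots> < 2"
    using mult_left_mono[of "norm t" 1 \<rho>] assms by linarith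
  also have "\<dots> \<le> exp 1"
    using exp_ge_add_one_self[of 1] by simp
  finally have "ln (norm w) < ln (exp 1)"
    using \<open>w \<noteq> 0\<close> by (subst ln_less_cancel_iff) auto
  then have "ln (norm w) < 1"
    by simp
  then show "Re (Ln (1 + of_real \<rho> * t)) < 1"
    using Re_Ln_w by (simp add: w_def)
  show "\<bar>Im (Ln (1 + of_real \<rho> * t))\<bar> < pi / 2"
    using Re_Ln_pos_lt_imp[OF w0] by (simp add: w_def)
qed

(* psi t = 3/4 + b Ln (1 + rho t): the logarithm squeezes the disc into a strip of width b pi,
   and rho is chosen so that Re psi still reaches down to 0. *)
lemma holomorphic_disc_into_thin_rectangle:
  fixes c :: real
  assumes "0 < c"
  obtains \<psi> t\<^sub>1 where "\<psi> holomorphic_on ball 0 1"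
    "\<And>t. norm t < 1 \<Longrightarrow> 0 \<le> Re (\<psi> t) \<and> Re (\<psi> t) \<le> 1 \<and> \<bar>Im (\<psi> t)\<bar> < c"
    "\<psi> 0 = 3/4" "norm t\<^sub>1 < 1" "\<psi> t\<^sub>1 = 1/4"
proof -
  define b where "b = min (1/4) (c/2)"
  have b: "0 < b" "b \<le> 1/4" "b * (pi / 2) < c"
    using assms pi_less_4 mult_strict_left_mono[of "pi / 2" 2 b]
    by (auto simp: b_def min_def)
  define \<rho> where "\<rho> = 1 - exp (- (3 / (4 * b)))"
  have \<rho>: "0 < \<rho>" "\<rho> < 1"
    using b by (simp_all add: \<rho>_def)
  define \<psi> where "\<psi> t = 3/4 + of_real b * Ln (1 + of_real \<rho> * t)" for t
  have "\<psi> holomorphic_on ball 0 1"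
    unfolding \<psi>_def using Ln_one_plus_disc_bounds(1)[OF \<rho>] by (auto intro!: holomorphic_intros)
  moreover have "0 \<le> Re (\<psi> t) \<and> Re (\<psi> t) \<le> 1 \<and> \<bar>Im (\<psi> t)\<bar> < c" if "norm t < 1" for t
  proof -
    define L where "L = Ln (1 + of_real \<rho> * t)"
    have "- (3 / (4 * b)) < Re L" "Re L < 1" "\<bar>Im L\<bar> < pi / 2"
      using Ln_one_plus_disc_bounds(2-4)[OF \<rho> that] by (simp_all add: L_def \<rho>_def)
    then have "b * (- (3 / (4 * b))) < b * Re L" "b * Re L < b * 1" "b * \<bar>Im L\<bar> < b * (pi / 2)"
      using mult_strict_left_mono b(1) by blast+
    moreover have "b * (- (3 / (4 * b))) = - (3 / 4)"
      using b(1) by simp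
    ultimately have "- (3 / 4) < b * Re L" "b * Re L < 1 / 4" "b * \<bar>Im L\<bar> < c"
      using b by linarith+
    then show ?thesis
      using b(1) by (simp add: \<psi>_def L_def[symmetric] abs_mult)
  qed
  moreover have "\<psi> 0 = 3/4"
    by (simp add: \<psi>_def)
  moreover obtain t\<^sub>1 where "norm t\<^sub>1 < 1" "\<psi> t\<^sub>1 = 1/4"
  proof
    define E where "E = exp (- (1 / (2 * b)))"
    define s where "s = (E - 1) / \<rho>"
    have "1 - \<rho> < E" "E < 1"
      using b by (simp_all add: \<rho>_def E_def field_simps)
    then have "\<bar>s\<bar> < 1"
      using \<rho> by (simp add: s_def abs_less_iff field_simps)
    then show "norm (of_real s :: complex) < 1"
      by simp
    have "1 + \<rho> * s = E"
      using \<rho> by (simp add: s_def)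
    then have "1 + of_real \<rho> * of_real s = (of_real E :: complex)"
      by (simp flip: \<open>1 + \<rho> * s = E\<close>)
    then have "Ln (1 + of_real \<rho> * of_real s) = of_real (- (1 / (2 * b)))"
      by (simp add: E_def Ln_of_real)
    moreover have "b * (- (1 / (2 * b))) = - 1/2"
      using b(1) by simp
    ultimately have "of_real b * Ln (1 + of_real \<rho> * of_real s) = (- 1/2 :: complex)"
      by (metis of_real_mult of_real_divide of_real_minus of_real_1 of_real_numeral)
    then show "\<psi> (of_real s) = 1/4"
      by (simp add: \<psi>_def)
  qed
  ultimately show ?thesis
    using that by blast
qed

lemma entire_approximation_on_unit_interval:
  fixes h :: "real \<Rightarrow> complex"
  assumes "continuous_on {0..1} h" "0 < e"
  obtains P where "P holomorphic_on UNIV" "\<And>s. s \<in> {0..1} \<Longrightarrow> norm (P (of_real s) - h s) < e"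
proof -
  have e: "0 < e / 2"
    using assms(2) by simp
  have "continuous_on {0..1} (\<lambda>s. Re (h s))" "continuous_on {0..1} (\<lambda>s. Im (h s))"
    using assms(1) by (auto intro: continuous_intros)
  then obtain p q where p: "real_polynomial_function p" "\<And>s. s \<in> {0..1} \<Longrightarrow> \<bar>Re (h s) - p s\<bar> < e / 2"
    and q: "real_polynomial_function q" "\<And>s. s \<in> {0..1} \<Longrightarrow> \<bar>Im (h s) - q s\<bar> < e / 2"
    using Stone_Weierstrass_real_polynomial_function[OF compact_Icc _ e] by metis
  obtain a n b m where ab: "p = (\<lambda>s. \<Sum>k\<le>n. a k * s ^ k)" "q = (\<lambda>s. \<Sum>k\<le>m. b k * s ^ k)"
    using real_polynomial_function_imp_sum[OF p(1)] real_polynomial_function_imp_sum[OF q(1)] by metis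
  define P where "P t = (\<Sum>k\<le>n. of_real (a k) * t ^ k) + \<i> * (\<Sum>k\<le>m. of_real (b k) * t ^ k)" for t
  show thesis
  proof
    show "P holomorphic_on UNIV"
      unfolding P_def by (intro holomorphic_intros)
    fix s :: real assume s: "s \<in> {0..1}"
    have "P (of_real s) = of_real (p s) + \<i> * of_real (q s)"
      by (simp add: P_def ab)
    then have "norm (P (of_real s) - h s) \<le> \<bar>Re (h s) - p s\<bar> + \<bar>Im (h s) - q s\<bar>"
      using cmod_le[of "P (of_real s) - h s"] by (simp add: abs_minus_commute)
    then show "norm (P (of_real s) - h s) < e"
      using p(2)[OF s] q(2)[OF s] by simp
  qed
qed

lemma entire_interpolating_approximation:
  fixes h :: "real \<Rightarrow> complex"
  assumes "continuous_on {0..1} h" "0 < e"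
  obtains P where "P holomorphic_on UNIV" "P (1/4) = h (1/4)" "P (3/4) = h (3/4)"
    "\<And>s. s \<in> {0..1} \<Longrightarrow> norm (P (of_real s) - h s) \<le> e"
proof -
  obtain Q where Q: "Q holomorphic_on UNIV" "\<And>s. s \<in> {0..1} \<Longrightarrow> norm (Q (of_real s) - h s) < e / 4"
    using entire_approximation_on_unit_interval[OF assms(1)] assms(2) by (metis zero_less_divide_iff zero_less_numeral)
  define \<alpha> where "\<alpha> = h (1/4) - Q (1/4)"
  define \<beta> where "\<beta> = h (3/4) - Q (3/4)"
  have "norm \<alpha> < e / 4" "norm \<beta> < e / 4"
    using Q(2)[of "1/4"] Q(2)[of "3/4"] by (simp_all add: \<alpha>_def \<beta>_def norm_minus_commute)
  define P where "P t = Q t + \<alpha> * ((3 - 4 * t) / 2) + \<beta> * ((4 * t - 1) / 2)" for t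
  show thesis
  proof
    show "P holomorphic_on UNIV"
      unfolding P_def using Q(1) by (intro holomorphic_intros) auto
    show "P (1/4) = h (1/4)" "P (3/4) = h (3/4)"
      by (simp_all add: P_def \<alpha>_def \<beta>_def)
    fix s :: real assume s: "s \<in> {0..1}"
    have "(3 - 4 * of_real s) / 2 = (of_real ((3 - 4 * s) / 2) :: complex)"
      "(4 * of_real s - 1) / 2 = (of_real ((4 * s - 1) / 2) :: complex)"
      by simp_all
    then have "norm ((3 - 4 * of_real s) / 2 :: complex) \<le> 3/2" "norm ((4 * of_real s - 1) / 2 :: complex) \<le> 3/2"
      using s by (simp_all only: norm_of_real) auto
    then have "norm \<alpha> * norm ((3 - 4 * of_real s) / 2 :: complex) \<le> e / 4 * (3/2)"
      "norm \<beta> * norm ((4 * of_real s - 1) / 2 :: complex) \<le> e / 4 * (3/2)"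
      using \<open>norm \<alpha> < e / 4\<close> \<open>norm \<beta> < e / 4\<close> assms(2)
      by (meson less_imp_le mult_mono norm_ge_zero zero_le_divide_iff zero_le_numeral)+
    then have "norm (\<alpha> * ((3 - 4 * of_real s) / 2)) \<le> e / 4 * (3/2)"
      "norm (\<beta> * ((4 * of_real s - 1) / 2)) \<le> e / 4 * (3/2)"
      by (simp_all only: norm_mult)
    moreover have "norm (P (of_real s) - h s) \<le> norm (Q (of_real s) - h s)
        + norm (\<alpha> * ((3 - 4 * of_real s) / 2)) + norm (\<beta> * ((4 * of_real s - 1) / 2))"
    proof -
      have "P (of_real s) - h s = (Q (of_real s) - h s)
          + \<alpha> * ((3 - 4 * of_real s) / 2) + \<beta> * ((4 * of_real s - 1) / 2)"
        by (simp add: P_def)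
      then show ?thesis
        by (metis norm_triangle_ineq add_right_mono order_trans)
    qed
    ultimately show "norm (P (of_real s) - h s) \<le> e"
      using Q(2)[OF s] by simp
  qed
qed

lemma entire_vec_interpolating_approximation:
  fixes \<gamma> :: "real \<Rightarrow> complex ^ 'n::finite"
  assumes "continuous_on {0..1} \<gamma>" "0 < e"
  obtains F :: "complex \<Rightarrow> complex ^ 'n" where "\<And>i. (\<lambda>t. F t $ i) holomorphic_on UNIV" "F (1/4) = \<gamma> (1/4)" "F (3/4) = \<gamma> (3/4)"
    "\<And>s. s \<in> {0..1} \<Longrightarrow> norm (F (of_real s) - \<gamma> s) \<le> e"
proof -
  have "\<exists>P. P holomorphic_on UNIV \<and> P (1/4) = \<gamma> (1/4) $ i \<and> P (3/4) = \<gamma> (3/4) $ i \<and>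
      (\<forall>s\<in>{0..1}. norm (P (of_real s) - \<gamma> s $ i) \<le> e / CARD('n))" for i
  proof -
    have "continuous_on {0..1} (\<lambda>s. \<gamma> s $ i)" "0 < e / CARD('n)"
      using assms by (auto intro: continuous_intros)
    then show ?thesis
      by (rule entire_interpolating_approximation) blast
  qed
  then obtain P where P: "\<And>i. P i holomorphic_on UNIV" "\<And>i. P i (1/4) = \<gamma> (1/4) $ i"
    "\<And>i. P i (3/4) = \<gamma> (3/4) $ i" "\<And>i s. s \<in> {0..1} \<Longrightarrow> norm (P i (of_real s) - \<gamma> s $ i) \<le> e / CARD('n)"
    by metis
  define F where "F t = (\<chi> i. P i t)" for t
  show thesis
  proof
    show "(\<lambda>t. F t $ i) holomorphic_on UNIV" "F (1/4) = \<gamma> (1/4)" "F (3/4) = \<gamma> (3/4)" for i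
      using P by (simp_all add: F_def vec_eq_iff)
    fix s :: real assume s: "s \<in> {0..1}"
    have "norm (F (of_real s) - \<gamma> s) \<le> (\<Sum>i\<in>UNIV. norm ((F (of_real s) - \<gamma> s) $ i))"
      unfolding norm_vec_def by (rule L2_set_le_sum) simp
    also have "\<dots> \<le> (\<Sum>i\<in>(UNIV :: 'n set). e / CARD('n))"
      using P(4)[OF s] by (intro sum_mono) (simp add: F_def)
    finally show "norm (F (of_real s) - \<gamma> s) \<le> e"
      by simp
  qed
qed

lemma uniformly_close_to_unit_interval:
  fixes F :: "complex \<Rightarrow> 'a::metric_space"
  assumes "continuous_on UNIV F" "0 < e"
  obtains c where "0 < c"
    "\<And>t. 0 \<le> Re t \<Longrightarrow> Re t \<le> 1 \<Longrightarrow> \<bar>Im t\<bar> < c \<Longrightarrow> dist (F t) (F (of_real (Re t))) < e"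
proof -
  define K where "K = cbox (- \<i>) (1 + \<i>)"
  have "uniformly_continuous_on K F"
    unfolding K_def by (rule compact_uniformly_continuous[OF continuous_on_subset[OF assms(1)] compact_cbox]) simp
  then obtain d where d: "0 < d" "\<And>t t'. t \<in> K \<Longrightarrow> t' \<in> K \<Longrightarrow> dist t' t < d \<Longrightarrow> dist (F t') (F t) < e"
    unfolding uniformly_continuous_on_def using assms(2) by metis
  show thesis
  proof (rule that[of "min 1 d"])
    fix t assume t: "0 \<le> Re t" "Re t \<le> 1" "\<bar>Im t\<bar> < min 1 d"
    have "t \<in> K" "of_real (Re t) \<in> K"
      using t by (auto simp: K_def cbox_complex_eq)
    moreover have "dist t (of_real (Re t)) < d"
      using t by (simp add: dist_norm cmod_def)
    ultimately show "dist (F t) (F (of_real (Re t))) < e"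
      using d(2) by blast
  qed (use d in simp)
qed

lemma lempert_set_nonempty:
  fixes D :: "(complex ^ 'n::finite) set"
  assumes "open D" "connected D" "x \<in> D" "y \<in> D"
  shows "lempert_set D x y \<noteq> {}"
proof -
  obtain \<gamma> where \<gamma>: "path \<gamma>" "path_image \<gamma> \<subseteq> D" "pathstart \<gamma> = x" "pathfinish \<gamma> = y"
    using connected_open_path_connected[OF assms(1,2)] assms(3,4) unfolding path_connected_def by blast
  obtain e where e: "0 < e" "(\<Union>z\<in>path_image \<gamma>. ball z e) \<subseteq> D"
    using compact_subset_open_imp_ball_epsilon_subset[OF compact_path_image[OF \<gamma>(1)] assms(1) \<gamma>(2)] by blast
  \<comment> \<open>constant near both ends, so the interpolation nodes 1/4 and 3/4 carry x and y\<close>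
  define \<gamma>' where "\<gamma>' s = \<gamma> (max 0 (min 1 (2 * s - 1/2)))" for s :: real
  have "continuous_on {0..1} \<gamma>'"
    unfolding \<gamma>'_def using \<gamma>(1) unfolding path_def
    by (rule continuous_on_compose2) (auto intro!: continuous_intros)
  moreover have "\<gamma>' (1/4) = x" "\<gamma>' (3/4) = y"
    using \<gamma>(3,4) by (simp_all add: \<gamma>'_def pathstart_def pathfinish_def)
  ultimately obtain F :: "complex \<Rightarrow> complex ^ 'n" where F: "\<And>i. (\<lambda>t. F t $ i) holomorphic_on UNIV"
    "F (1/4) = x" "F (3/4) = y" "\<And>s. s \<in> {0..1} \<Longrightarrow> norm (F (of_real s) - \<gamma>' s) \<le> e / 2"
    using entire_vec_interpolating_approximation[of \<gamma>' "e / 2"] e(1) by auto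
  have "continuous_on UNIV (\<lambda>t. \<chi> i. F t $ i)"
    using F(1) by (intro continuous_on_vec_lambda holomorphic_on_imp_continuous_on)
  then obtain c where c: "0 < c"
    "\<And>t. 0 \<le> Re t \<Longrightarrow> Re t \<le> 1 \<Longrightarrow> \<bar>Im t\<bar> < c \<Longrightarrow> dist (F t) (F (of_real (Re t))) < e / 2"
    using uniformly_close_to_unit_interval[of F "e / 2"] e(1) by auto
  obtain \<psi> t\<^sub>1 where \<psi>: "\<psi> holomorphic_on ball 0 1"
    "\<And>t. norm t < 1 \<Longrightarrow> 0 \<le> Re (\<psi> t) \<and> Re (\<psi> t) \<le> 1 \<and> \<bar>Im (\<psi> t)\<bar> < c"
    "\<psi> 0 = 3/4" "norm t\<^sub>1 < 1" "\<psi> t\<^sub>1 = 1/4"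
    using holomorphic_disc_into_thin_rectangle[OF c(1)] by blast
  have "(F \<circ> \<psi>) ` ball 0 1 \<subseteq> D"
  proof clarsimp
    fix t :: complex assume t: "norm t < 1"
    define s where "s = Re (\<psi> t)"
    have "dist (F (\<psi> t)) (F (of_real s)) < e / 2" "dist (F (of_real s)) (\<gamma>' s) \<le> e / 2"
      using c(2) \<psi>(2)[OF t] F(4)[of s] by (simp_all add: s_def dist_norm)
    then have "F (\<psi> t) \<in> ball (\<gamma>' s) e"
      using dist_triangle[of "F (\<psi> t)" "\<gamma>' s" "F (of_real s)"] by (simp add: dist_commute)
    moreover have "\<gamma>' s \<in> path_image \<gamma>"
      by (auto simp: \<gamma>'_def path_image_def)
    ultimately show "F (\<psi> t) \<in> D"
      using e(2) by blast
  qed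
  moreover have "disc_holomorphic_on (F \<circ> \<psi>) (ball 0 1)"
    unfolding disc_holomorphic_on_iff_components[OF open_ball] o_def
    using holomorphic_on_compose[OF \<psi>(1) holomorphic_on_subset[OF F(1)]] by (simp add: o_def)
  ultimately have "poincare_dist t\<^sub>1 0 \<in> lempert_set D x y"
    using lempert_setI[of t\<^sub>1 0 "F \<circ> \<psi>"] \<psi>(3-5) F(2,3) by simp
  then show ?thesis
    by blast
qed

section \<open>The Kobayashi distance\<close>

definition lempert_chain_length :: "(complex ^ 'n::finite) set \<Rightarrow> (complex ^ 'n) list \<Rightarrow> real" where
  "lempert_chain_length D zs = (\<Sum>i<length zs - 1. lempert D (zs ! i) (zs ! Suc i))"

lemma kobayashi_eq_Inf:
  "kobayashi D z w = Inf {lempert_chain_length D zs | zs. zs \<noteq> [] \<and> hd zs = z \<and> last zs = w \<and> set zs \<subseteq> D}"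
  unfolding kobayashi_def lempert_chain_length_def ..

lemma lempert_chain_length_snoc:
  assumes "zs \<noteq> []"
  shows "lempert_chain_length D (zs @ [w]) = lempert_chain_length D zs + lempert D (last zs) w"
proof -
  obtain n where n: "length zs = Suc n"
    using assms by (cases zs) auto
  have "lempert_chain_length D (zs @ [w])
      = (\<Sum>i<n. lempert D ((zs @ [w]) ! i) ((zs @ [w]) ! Suc i)) + lempert D (zs ! n) w"
    by (simp add: lempert_chain_length_def n nth_append)
  also have "(\<Sum>i<n. lempert D ((zs @ [w]) ! i) ((zs @ [w]) ! Suc i)) = lempert_chain_length D zs"
    unfolding lempert_chain_length_def n by (rule sum.cong) (auto simp: nth_append n)
  finally show ?thesis
    using assms by (simp add: last_conv_nth n)
qed

lemma norm_hd_last_le_sum: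
  fixes zs :: "'a::real_normed_vector list"
  assumes "zs \<noteq> []"
  shows "norm (hd zs - last zs) \<le> (\<Sum>i<length zs - 1. norm (zs ! i - zs ! Suc i))"
proof -
  have "hd zs - last zs = (\<Sum>i<length zs - 1. zs ! i - zs ! Suc i)"
    using assms by (simp add: sum_lessThan_telescope' hd_conv_nth last_conv_nth)
  then show ?thesis
    by (simp add: norm_sum)
qed

(* lempert and kobayashi are infima of sets of reals and carry no information when these sets are
   empty; for an open connected D they are nonempty by lempert_set_nonempty. *)
context
  fixes D :: "(complex ^ 'n::finite) set"
  assumes open_D: "open D" and connected_D: "connected D"
begin

lemma lempert_nonneg:
  assumes "z \<in> D" "w \<in> D"
  shows "0 \<le> lempert D z w"
  unfolding lempert_eq_Inf
  by (rule cInf_greatest[OF lempert_set_nonempty[OF open_D connected_D assms]]) (rule lempert_set_nonneg)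

lemma lempert_image_le:
  assumes "cvec_holomorphic_on f D" "f ` D \<subseteq> D" "z \<in> D" "w \<in> D"
  shows "lempert D (f z) (f w) \<le> lempert D z w"
  unfolding lempert_eq_Inf
proof (rule cInf_superset_mono)
  show "lempert_set D z w \<noteq> {}"
    using lempert_set_nonempty[OF open_D connected_D assms(3,4)] .
  show "bdd_below (lempert_set D (f z) (f w))"
    by (auto intro: bdd_belowI lempert_set_nonneg)
qed (rule lempert_set_image_subset[OF assms(1,2)])

lemma norm_diff_le_lempert:
  assumes "D \<subseteq> cball 0 R" "z \<in> D" "w \<in> D"
  shows "norm (z - w) \<le> 2 * real CARD('n) * (2 * R + 1) * lempert D z w"
proof -
  define C where "C = 2 * real CARD('n) * (2 * R + 1)"
  have "norm z \<le> R"
    using assms(1,2) by auto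
  then have "0 \<le> R"
    by (rule order_trans[OF norm_ge_zero])
  then have "0 < C"
    by (simp add: C_def)
  have "norm (z - w) / C \<le> lempert D z w"
    unfolding lempert_eq_Inf
  proof (rule cInf_greatest[OF lempert_set_nonempty[OF open_D connected_D assms(2,3)]])
    fix x assume "x \<in> lempert_set D z w"
    then show "norm (z - w) / C \<le> x"
      using norm_diff_le_lempert_set[OF assms(1)] \<open>0 < C\<close> by (simp add: C_def divide_le_eq mult.commute)
  qed
  then show ?thesis
    using \<open>0 < C\<close> by (simp add: C_def divide_le_eq mult.commute)
qed

lemma lempert_chain_length_nonneg: "set zs \<subseteq> D \<Longrightarrow> 0 \<le> lempert_chain_length D zs"
  unfolding lempert_chain_length_def by (intro sum_nonneg lempert_nonneg) auto

lemma kobayashi_le_chain: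
  assumes "zs \<noteq> []" "set zs \<subseteq> D"
  shows "kobayashi D (hd zs) (last zs) \<le> lempert_chain_length D zs"
  unfolding kobayashi_eq_Inf
  by (rule cInf_lower) (use assms lempert_chain_length_nonneg in \<open>auto intro!: bdd_belowI[of _ 0]\<close>)

lemma kobayashi_greatest:
  assumes "z \<in> D" "w \<in> D"
    and "\<And>zs. zs \<noteq> [] \<Longrightarrow> hd zs = z \<Longrightarrow> last zs = w \<Longrightarrow> set zs \<subseteq> D \<Longrightarrow> c \<le> lempert_chain_length D zs"
  shows "c \<le> kobayashi D z w"
  unfolding kobayashi_eq_Inf
proof (rule cInf_greatest)
  show "{lempert_chain_length D zs | zs. zs \<noteq> [] \<and> hd zs = z \<and> last zs = w \<and> set zs \<subseteq> D} \<noteq> {}"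
    using assms(1,2) by (auto intro!: exI[of _ "[z, w]"])
qed (use assms(3) in auto)

lemma kobayashi_le_add_lempert:
  assumes "z \<in> D" "u \<in> D" "w \<in> D"
  shows "kobayashi D z w \<le> kobayashi D z u + lempert D u w"
proof -
  have "kobayashi D z w - lempert D u w \<le> kobayashi D z u"
  proof (rule kobayashi_greatest[OF assms(1,2)])
    fix zs assume zs: "zs \<noteq> []" "hd zs = z" "last zs = u" "set zs \<subseteq> D"
    have "kobayashi D z w \<le> lempert_chain_length D (zs @ [w])"
      using kobayashi_le_chain[of "zs @ [w]"] zs assms(3) by simp
    then show "kobayashi D z w - lempert D u w \<le> lempert_chain_length D zs"
      using lempert_chain_length_snoc[OF zs(1)] zs(3) by simp
  qed
  then show ?thesis
    by simp
qed

lemma kobayashi_image_le: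
  assumes "cvec_holomorphic_on f D" "f ` D \<subseteq> D" "z \<in> D" "w \<in> D"
  shows "kobayashi D (f z) (f w) \<le> kobayashi D z w"
proof (rule kobayashi_greatest[OF assms(3,4)])
  fix zs assume zs: "zs \<noteq> []" "hd zs = z" "last zs = w" "set zs \<subseteq> D"
  have "kobayashi D (f z) (f w) \<le> lempert_chain_length D (map f zs)"
    using kobayashi_le_chain[of "map f zs"] zs assms(2) by (auto simp: hd_map last_map)
  also have "\<dots> \<le> lempert_chain_length D zs"
    unfolding lempert_chain_length_def length_map
  proof (rule sum_mono)
    fix i assume "i \<in> {..<length zs - 1}"
    then have "zs ! i \<in> D" "zs ! Suc i \<in> D"
      using zs(4) by (auto simp: subset_iff)
    then show "lempert D (map f zs ! i) (map f zs ! Suc i) \<le> lempert D (zs ! i) (zs ! Suc i)"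
      using \<open>i \<in> {..<length zs - 1}\<close> lempert_image_le[OF assms(1,2)] by simp
  qed
  finally show "kobayashi D (f z) (f w) \<le> lempert_chain_length D zs" .
qed

lemma kobayashi_lower_bound:
  assumes "bounded D"
  obtains C where "0 < C" "\<And>z w. z \<in> D \<Longrightarrow> w \<in> D \<Longrightarrow> norm (z - w) \<le> C * kobayashi D z w"
proof -
  obtain R where R: "0 < R" "D \<subseteq> cball 0 R"
    using assms unfolding bounded_pos by (auto simp: subset_iff)
  define C where "C = 2 * real CARD('n) * (2 * R + 1)"
  have "0 < C"
    using R(1) by (simp add: C_def)
  moreover have "norm (z - w) \<le> C * kobayashi D z w" if "z \<in> D" "w \<in> D" for z w
  proof -
    have "norm (z - w) / C \<le> kobayashi D z w"
    proof (rule kobayashi_greatest[OF that])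
      fix zs assume zs: "zs \<noteq> []" "hd zs = z" "last zs = w" "set zs \<subseteq> D"
      have "norm (z - w) \<le> (\<Sum>i<length zs - 1. norm (zs ! i - zs ! Suc i))"
        using norm_hd_last_le_sum[OF zs(1)] zs(2,3) by simp
      also have "\<dots> \<le> (\<Sum>i<length zs - 1. C * lempert D (zs ! i) (zs ! Suc i))"
        using zs(4) norm_diff_le_lempert[OF R(2)]
        by (intro sum_mono) (auto simp: C_def subset_iff)
      also have "\<dots> = C * lempert_chain_length D zs"
        by (simp add: lempert_chain_length_def sum_distrib_left)
      finally show "norm (z - w) / C \<le> lempert_chain_length D zs"
        using \<open>0 < C\<close> by (simp add: divide_le_eq mult.commute)
    qed
    then show ?thesis
      using \<open>0 < C\<close> by (simp add: divide_le_eq mult.commute)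
  qed
  ultimately show thesis
    using that by blast
qed

lemma kobayashi_le_of_tendsto:
  assumes "a \<in> D" "p \<in> D" "\<And>m. u m \<in> D" "\<And>m. kobayashi D a (u m) \<le> \<rho>" "u \<longlonglongrightarrow> p"
  shows "kobayashi D a p \<le> \<rho>"
proof -
  obtain \<delta> where \<delta>: "0 < \<delta>" "ball p \<delta> \<subseteq> D"
    using open_D assms(2) open_contains_ball by blast
  have "eventually (\<lambda>m. norm (u m - p) < \<delta>) sequentially"
    using assms(5) \<delta>(1) unfolding tendsto_iff by (simp add: dist_norm)
  then have "eventually (\<lambda>m. kobayashi D a p \<le> \<rho> + artanh (norm (u m - p) / \<delta>)) sequentially"
  proof (rule eventually_mono)
    fix m assume "norm (u m - p) < \<delta>"
    then have "lempert D (u m) p \<le> artanh (norm (u m - p) / \<delta>)"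
      by (intro lempert_le artanh_in_lempert_set \<delta>(2))
    then show "kobayashi D a p \<le> \<rho> + artanh (norm (u m - p) / \<delta>)"
      using kobayashi_le_add_lempert[OF assms(1) assms(3)[of m] assms(2)] assms(4)[of m] by linarith
  qed
  moreover have "(\<lambda>m. \<rho> + artanh (norm (u m - p) / \<delta>)) \<longlonglongrightarrow> \<rho> + artanh (norm (p - p) / \<delta>)"
    by (intro tendsto_intros tendsto_artanh assms(5)) (use \<delta>(1) in auto)
  ultimately show ?thesis
    using tendsto_lowerbound by fastforce
qed

lemma funpow_kobayashi_le:
  assumes "cvec_holomorphic_on f D" "f ` D \<subseteq> D" "z \<in> D" "w \<in> D"
  shows "(f ^^ m) z \<in> D \<and> kobayashi D ((f ^^ m) w) ((f ^^ m) z) \<le> kobayashi D w z"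
proof (induction m)
  case (Suc m)
  moreover have "(f ^^ m) w \<in> D"
    using assms(2,4) by (induction m) auto
  ultimately show ?case
    using kobayashi_image_le[OF assms(1,2), of "(f ^^ m) w" "(f ^^ m) z"] assms(2) by auto
qed (use assms(3) in simp)

lemma kobayashi_closed_ball_sequentially_closed:
  assumes "bounded D" "a \<in> D"
  obtains r where "0 < r"
    "\<And>u p \<rho>. \<rho> < r \<Longrightarrow> (\<And>m. u m \<in> D) \<Longrightarrow> (\<And>m. kobayashi D a (u m) \<le> \<rho>) \<Longrightarrow> u \<longlonglongrightarrow> p
      \<Longrightarrow> p \<in> D \<and> kobayashi D a p \<le> \<rho>"
proof -
  obtain C where C: "0 < C" "\<And>z w. z \<in> D \<Longrightarrow> w \<in> D \<Longrightarrow> norm (z - w) \<le> C * kobayashi D z w"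
    using kobayashi_lower_bound[OF assms(1)] by blast
  obtain \<epsilon> where \<epsilon>: "0 < \<epsilon>" "ball a \<epsilon> \<subseteq> D"
    using open_D assms(2) open_contains_ball by blast
  show thesis
  proof (rule that[of "\<epsilon> / C"])
    show "0 < \<epsilon> / C"
      using \<epsilon>(1) C(1) by simp
    fix u p \<rho>
    assume \<rho>: "\<rho> < \<epsilon> / C" and u: "\<And>m. u m \<in> D" "\<And>m. kobayashi D a (u m) \<le> \<rho>" and lim: "u \<longlonglongrightarrow> p"
    have "norm (a - u m) \<le> C * \<rho>" for m
      using C(2)[OF assms(2) u(1)] mult_left_mono[OF u(2) less_imp_le[OF C(1)]] by (rule order_trans)
    then have "norm (a - p) \<le> C * \<rho>"
      by (intro tendsto_upperbound[OF tendsto_norm[OF tendsto_diff[OF tendsto_const lim]]])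
        (auto intro: always_eventually)
    also have "\<dots> < \<epsilon>"
      using \<rho> C(1) by (simp add: field_simps)
    finally have "p \<in> D"
      using \<epsilon>(2) by (auto simp: dist_norm)
    then show "p \<in> D \<and> kobayashi D a p \<le> \<rho>"
      using kobayashi_le_of_tendsto[OF assms(2) _ u lim] by blast
  qed
qed

end

theorem proposition11p3:
  fixes D :: "(complex ^ 'n::finite) set" and f :: "complex ^ 'n \<Rightarrow> complex ^ 'n"
    and a :: "complex ^ 'n"
  assumes "open D" and "connected D" and "bounded D"
    and "cvec_holomorphic_on f D" and "f ` D \<subseteq> D"
    and "a \<in> D" and "f a = a"
  shows "(\<forall>r>0. f ` kob_ball D a r \<subseteq> kob_ball D a r) \<and>
         (\<exists>r>0. property_H (\<lambda>m. f ^^ m) (kob_ball D a r) (kob_ball D a r))"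
proof -
  have "(f ^^ m) a = a" for m
    by (induction m) (simp_all add: assms(7))
  then have iterate: "(f ^^ m) z \<in> D \<and> kobayashi D a ((f ^^ m) z) \<le> kobayashi D a z" if "z \<in> D" for z m
    using funpow_kobayashi_le[OF assms(1,2,4,5) that assms(6)] by simp
  have "f ` kob_ball D a r \<subseteq> kob_ball D a r" for r
    using iterate[of _ 1] by (fastforce simp: kob_ball_def intro: order_le_less_trans)
  moreover obtain r where r: "0 < r"
    "\<And>u p \<rho>. \<rho> < r \<Longrightarrow> (\<And>m. u m \<in> D) \<Longrightarrow> (\<And>m. kobayashi D a (u m) \<le> \<rho>) \<Longrightarrow> u \<longlonglongrightarrow> p
      \<Longrightarrow> p \<in> D \<and> kobayashi D a p \<le> \<rho>"
    using kobayashi_closed_ball_sequentially_closed[OF assms(1-3,6)] by blast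
  have "property_H (\<lambda>m. f ^^ m) (kob_ball D a r) (kob_ball D a r)"
    unfolding property_H_def
  proof (intro allI impI subsetI)
    fix s g y
    assume H: "strict_mono s \<and> (\<forall>K. compact K \<and> K \<subseteq> kob_ball D a r \<longrightarrow>
        uniform_limit K (\<lambda>m. f ^^ s m) g sequentially)" and "y \<in> g ` kob_ball D a r"
    then obtain z where z: "z \<in> kob_ball D a r" "y = g z"
      by blast
    have "uniform_limit {z} (\<lambda>m. f ^^ s m) g sequentially"
      using conjunct2[OF H, rule_format, of "{z}"] z(1) by simp
    then have lim: "(\<lambda>m. (f ^^ s m) z) \<longlonglongrightarrow> g z"
      by (rule tendsto_uniform_limitI) simp
    have z_D: "z \<in> D" "kobayashi D a z < r"
      using z(1) by (simp_all add: kob_ball_def)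
    have "g z \<in> D \<and> kobayashi D a (g z) \<le> kobayashi D a z"
      by (rule r(2)[OF z_D(2) _ _ lim]) (simp_all add: iterate[OF z_D(1)])
    then show "y \<in> kob_ball D a r"
      using z_D(2) z(2) by (simp add: kob_ball_def)
  qed
  ultimately show ?thesis
    using r(1) by blast
qed

end
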